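(* Let $K$ be a Kan complex, $v\in K_0$ a vertex and $n\geq1$. Then the homotopy monoid $\tau_n(\mathrm{th}_0(K),v)$ (with the multiplication defined in the context) is a group, and it coincides, as a group, with the simplicial homotopy group $\pi_n(K,v)$.
   Context: A stratified simplicial set is a pair $(X,tX)$ where $X$ is a simplicial set and $tX$ is a set of simplices of $X$ (thin simplices) containing all degenerate simplices and no $0$-simplices; stratified maps are simplicial maps preserving thin simplices. For a Kan complex $K$, $\mathrm{th}_0(K)$ denotes the stratified simplicial set $(K,\bigcup_{m\ge1}K_m)$ (all simplices of positive dimension thin); it is a weak complicial set. For $n\ge1$, $\Delta[n]_t$ is $\Delta[n]$ with thin simplices the degenerate ones and $\mathrm{Id}_{[n]}$. For $k\in[n]$, $\Delta^k[n]$ is $\Delta[n]$ with thin simplices the degenerate ones and all $\alpha:[m]\to[n]$ with $\{k-1,k,k+1\}\cap[n]\subset\mathrm{Im}(\alpha)$. The product $X\circledast Y$ has underlying simplicial set $X\times Y$, with $(x,y)$ thin iff $x$ and $y$ are thin. For stratified maps $f,g:A\to X$ and an inclusion $B\hookrightarrow A$ with $f|_B=g|_B$, $f\sim_B g$ means there is a stratified map $H:A\circledast\Delta[1]_t\to X$ with $H|_{A\times\{0\}}=f$, $H|_{A\times\{1\}}=g$ and $H|_{B\circledast\Delta[1]_t}=f|_B\circ\mathrm{proj}_B$; $n$-simplices are regarded as stratified maps from $\Delta[n]$ with only degenerate simplices thin. For a weak complicial set $X$, vertex $x$, and $n\ge1$, $\tau_n(X,x)$ is the set of $\sim_{\partial\Delta[n]}$-classes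 of $n$-simplices $\alpha$ whose restriction to $\partial\Delta[n]$ is constant at $x$, with multiplication $[\alpha][\beta]=[d_n\theta]$ where $\theta:\Delta^n[n+1]\to X$ is any stratified map with $d_{n-1}\theta=\alpha$, $d_{n+1}\theta=\beta$, and $d_i\theta$ constant at $x$ for $i\notin\{n-1,n,n+1\}$; this is a monoid with unit the class of the constant simplex at $x$. *)

theory Defs
  imports "HOL-Algebra.Group"
begin

text \<open>A simplicial set is given by its sets of m-simplices and, for every monotone
  map f : [m] -> [k] (represented by a function on nat, only its values on {0..m}
  matter), the induced map X_k -> X_m, written ss_act X f m k.\<close>

record 'a sset =
  ss_sx  :: "nat \<Rightarrow> 'a set"
  ss_act :: "(nat \<Rightarrow> nat) \<Rightarrow> nat \<Rightarrow> nat \<Rightarrow> 'a \<Rightarrow> 'a"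

record 'a ssset = "'a sset" +
  ss_thin :: "nat \<Rightarrow> 'a set"

definition simp_op :: "(nat \<Rightarrow> nat) \<Rightarrow> nat \<Rightarrow> nat \<Rightarrow> bool" where
  "simp_op f m k \<longleftrightarrow> (\<forall>i j. i \<le> j \<and> j \<le> m \<longrightarrow> f i \<le> f j) \<and> (\<forall>i\<le>m. f i \<le> k)"

definition is_sset :: "('a, 'z) sset_scheme \<Rightarrow> bool" where
  "is_sset X \<longleftrightarrow>
     (\<forall>f m k x. simp_op f m k \<and> x \<in> ss_sx X k \<longrightarrow> ss_act X f m k x \<in> ss_sx X m) \<and>
     (\<forall>k x. x \<in> ss_sx X k \<longrightarrow> ss_act X id k k x = x) \<and>
     (\<forall>f g m k l x. simp_op f m k \<and> simp_op g k l \<and> x \<in> ss_sx X l \<longrightarrow>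
         ss_act X (g \<circ> f) m l x = ss_act X f m k (ss_act X g k l x)) \<and>
     (\<forall>f f' m k x. (\<forall>i\<le>m. f i = f' i) \<and> x \<in> ss_sx X k \<longrightarrow>
         ss_act X f m k x = ss_act X f' m k x)"

definition coface :: "nat \<Rightarrow> nat \<Rightarrow> nat" where
  "coface i j = (if j < i then j else Suc j)"

definition ss_face :: "('a, 'z) sset_scheme \<Rightarrow> nat \<Rightarrow> nat \<Rightarrow> 'a \<Rightarrow> 'a" where
  "ss_face X i k x = ss_act X (coface i) (k - 1) k x"

definition ss_const :: "('a, 'z) sset_scheme \<Rightarrow> nat \<Rightarrow> 'a \<Rightarrow> 'a" where
  "ss_const X m v = ss_act X (\<lambda>_. 0) m 0 v"

definition degenerate :: "('a, 'z) sset_scheme \<Rightarrow> nat \<Rightarrow> 'a \<Rightarrow> bool" where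
  "degenerate X m x \<longleftrightarrow> x \<in> ss_sx X m \<and>
     (\<exists>k<m. \<exists>\<sigma> y. simp_op \<sigma> m k \<and> \<sigma> ` {..m} = {..k} \<and> y \<in> ss_sx X k \<and>
        x = ss_act X \<sigma> m k y)"

definition kan_complex :: "'a sset \<Rightarrow> bool" where
  "kan_complex K \<longleftrightarrow> is_sset K \<and>
     (\<forall>n k (x :: nat \<Rightarrow> 'a). 1 \<le> n \<and> k \<le> n \<and>
        (\<forall>i\<le>n. i \<noteq> k \<longrightarrow> x i \<in> ss_sx K (n - 1)) \<and>
        (\<forall>i j. i < j \<and> j \<le> n \<and> i \<noteq> k \<and> j \<noteq> k \<longrightarrow>
            ss_face K i (n - 1) (x j) = ss_face K (j - 1) (n - 1) (x i))
        \<longrightarrow> (\<exists>y\<in>ss_sx K n. \<forall>i\<le>n. i \<noteq> k \<longrightarrow> ss_face K i n y = x i))"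

definition is_strat :: "'a ssset \<Rightarrow> bool" where
  "is_strat X \<longleftrightarrow> is_sset X \<and> (\<forall>m. ss_thin X m \<subseteq> ss_sx X m) \<and>
     (\<forall>m x. degenerate X m x \<longrightarrow> x \<in> ss_thin X m) \<and> ss_thin X 0 = {}"

definition strat_map :: "'a ssset \<Rightarrow> 'b ssset \<Rightarrow> (nat \<Rightarrow> 'a \<Rightarrow> 'b) \<Rightarrow> bool" where
  "strat_map X Y F \<longleftrightarrow>
     (\<forall>m x. x \<in> ss_sx X m \<longrightarrow> F m x \<in> ss_sx Y m) \<and>
     (\<forall>f m k x. simp_op f m k \<and> x \<in> ss_sx X k \<longrightarrow>
         F m (ss_act X f m k x) = ss_act Y f m k (F k x)) \<and>
     (\<forall>m x. x \<in> ss_thin X m \<longrightarrow> F m x \<in> ss_thin Y m)"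

definition mk_strat :: "'a sset \<Rightarrow> (nat \<Rightarrow> 'a set) \<Rightarrow> 'a ssset" where
  "mk_strat X T = \<lparr>ss_sx = ss_sx X, ss_act = ss_act X, ss_thin = T\<rparr>"

definition th0 :: "'a sset \<Rightarrow> 'a ssset" where
  "th0 K = mk_strat K (\<lambda>m. if m = 0 then {} else ss_sx K m)"

text \<open>The standard simplex Delta[n]: m-simplices are monotone maps [m] -> [n],
  represented as sorted lists of length m+1 with entries <= n.\<close>
definition delta :: "nat \<Rightarrow> nat list sset" where
  "delta n = \<lparr>ss_sx = (\<lambda>m. {xs. length xs = Suc m \<and> sorted xs \<and> (\<forall>i\<in>set xs. i \<le> n)}),
              ss_act = (\<lambda>f m k xs. map (\<lambda>i. xs ! f i) [0..<Suc m])\<rparr>"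

definition delta_min :: "nat \<Rightarrow> nat list ssset" where
  "delta_min n = mk_strat (delta n) (\<lambda>m. {xs. degenerate (delta n) m xs})"

definition delta_t :: "nat \<Rightarrow> nat list ssset" where
  "delta_t n = mk_strat (delta n)
     (\<lambda>m. {xs. degenerate (delta n) m xs} \<union> (if m = n then {[0..<Suc n]} else {}))"

definition delta_adm :: "nat \<Rightarrow> nat \<Rightarrow> nat list ssset" where
  "delta_adm k n = mk_strat (delta n)
     (\<lambda>m. {xs. degenerate (delta n) m xs} \<union>
          {xs \<in> ss_sx (delta n) m. {i. i \<le> n \<and> (i + 1 = k \<or> i = k \<or> i = k + 1)} \<subseteq> set xs})"

definition sprod :: "'a ssset \<Rightarrow> 'b ssset \<Rightarrow> ('a \<times> 'b) ssset" where
  "sprod X Y = \<lparr>ss_sx = (\<lambda>m. ss_sx X m \<times> ss_sx Y m),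
                ss_act = (\<lambda>f m k p. (ss_act X f m k (fst p), ss_act Y f m k (snd p))),
                ss_thin = (\<lambda>m. ss_thin X m \<times> ss_thin Y m)\<rparr>"

text \<open>an n-simplex x regarded as a map Delta[n] -> X (Yoneda)\<close>
definition yon :: "('a, 'z) sset_scheme \<Rightarrow> nat \<Rightarrow> 'a \<Rightarrow> nat \<Rightarrow> nat list \<Rightarrow> 'a" where
  "yon X n x = (\<lambda>m \<xi>. ss_act X (\<lambda>i. \<xi> ! i) m n x)"

definition bdry :: "nat \<Rightarrow> nat \<Rightarrow> nat list set" where
  "bdry n m = {\<xi> \<in> ss_sx (delta n) m. \<not> {..n} \<subseteq> set \<xi>}"

definition tau_sphere :: "'a ssset \<Rightarrow> 'a \<Rightarrow> nat \<Rightarrow> 'a set" where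
  "tau_sphere X v n = {\<alpha> \<in> ss_sx X n. \<forall>m \<xi>. \<xi> \<in> bdry n m \<longrightarrow> yon X n \<alpha> m \<xi> = ss_const X m v}"

definition tau_htpy :: "'a ssset \<Rightarrow> nat \<Rightarrow> 'a \<Rightarrow> 'a \<Rightarrow> bool" where
  "tau_htpy X n \<alpha> \<beta> \<longleftrightarrow>
     (\<exists>H. strat_map (sprod (delta_min n) (delta_t 1)) X H \<and>
        (\<forall>m \<xi>. \<xi> \<in> ss_sx (delta n) m \<longrightarrow>
            H m (\<xi>, replicate (Suc m) 0) = yon X n \<alpha> m \<xi> \<and>
            H m (\<xi>, replicate (Suc m) 1) = yon X n \<beta> m \<xi>) \<and>
        (\<forall>m \<xi> \<eta>. \<xi> \<in> bdry n m \<and> \<eta> \<in> ss_sx (delta 1) m \<longrightarrow> H m (\<xi>, \<eta>) = yon X n \<alpha> m \<xi>))"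

definition tau_cls :: "'a ssset \<Rightarrow> 'a \<Rightarrow> nat \<Rightarrow> 'a \<Rightarrow> 'a set" where
  "tau_cls X v n \<alpha> = {\<beta> \<in> tau_sphere X v n. tau_htpy X n \<alpha> \<beta>}"

definition tau_witness :: "'a ssset \<Rightarrow> 'a \<Rightarrow> nat \<Rightarrow> 'a \<Rightarrow> 'a \<Rightarrow> 'a \<Rightarrow> bool" where
  "tau_witness X v n \<alpha> \<beta> \<theta> \<longleftrightarrow> \<theta> \<in> ss_sx X (Suc n) \<and>
     strat_map (delta_adm n (Suc n)) X (yon X (Suc n) \<theta>) \<and>
     ss_face X (n - 1) (Suc n) \<theta> = \<alpha> \<and> ss_face X (Suc n) (Suc n) \<theta> = \<beta> \<and>
     (\<forall>i\<le>Suc n. i \<notin> {n - 1, n, Suc n} \<longrightarrow> ss_face X i (Suc n) \<theta> = ss_const X n v)"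

definition tau_monoid :: "'a ssset \<Rightarrow> 'a \<Rightarrow> nat \<Rightarrow> 'a set monoid" where
  "tau_monoid X v n =
     \<lparr>carrier = tau_cls X v n ` tau_sphere X v n,
      mult = (\<lambda>A B. THE C. \<exists>\<alpha>\<in>A. \<exists>\<beta>\<in>B. \<exists>\<theta>. tau_witness X v n \<alpha> \<beta> \<theta> \<and>
                                 C = tau_cls X v n (ss_face X n (Suc n) \<theta>)),
      one = tau_cls X v n (ss_const X n v)\<rparr>"

definition pi_sphere :: "'a sset \<Rightarrow> 'a \<Rightarrow> nat \<Rightarrow> 'a set" where
  "pi_sphere K v n = {x \<in> ss_sx K n. \<forall>i\<le>n. ss_face K i n x = ss_const K (n - 1) v}"

definition pi_htpy :: "'a sset \<Rightarrow> 'a \<Rightarrow> nat \<Rightarrow> 'a \<Rightarrow> 'a \<Rightarrow> bool" where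
  "pi_htpy K v n x x' \<longleftrightarrow> (\<exists>y\<in>ss_sx K (Suc n).
     ss_face K n (Suc n) y = x \<and> ss_face K (Suc n) (Suc n) y = x' \<and>
     (\<forall>i<n. ss_face K i (Suc n) y = ss_const K n v))"

definition pi_cls :: "'a sset \<Rightarrow> 'a \<Rightarrow> nat \<Rightarrow> 'a \<Rightarrow> 'a set" where
  "pi_cls K v n x = {x' \<in> pi_sphere K v n. pi_htpy K v n x x'}"

definition pi_group :: "'a sset \<Rightarrow> 'a \<Rightarrow> nat \<Rightarrow> 'a set monoid" where
  "pi_group K v n =
     \<lparr>carrier = pi_cls K v n ` pi_sphere K v n,
      mult = (\<lambda>A B. THE C. \<exists>x\<in>A. \<exists>y\<in>B. \<exists>z\<in>ss_sx K (Suc n).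
                 (\<forall>i<n - 1. ss_face K i (Suc n) z = ss_const K n v) \<and>
                 ss_face K (n - 1) (Suc n) z = x \<and> ss_face K (Suc n) (Suc n) z = y \<and>
                 C = pi_cls K v n (ss_face K n (Suc n) z)),
      one = pi_cls K v n (ss_const K n v)\<rparr>"

end

theory Submission
  imports Defs
begin

text \<open>In \<open>th\<^sub>0(K)\<close> every simplex of positive dimension is thin, so all thinness
  conditions in the definition of \<open>\<tau>\<^sub>n\<close> are void. A product witness \<open>\<theta>\<close> is then just an
  \<open>(n+1)\<close>-simplex with faces \<open>\<alpha>\<close>, \<open>\<beta>\<close> in positions \<open>n - 1\<close>, \<open>n + 1\<close> and the base point
  elsewhere, which is May's product in \<open>\<pi>\<^sub>n\<close>, and a simplex is constant on \<open>\<partial>\<Delta>[n]\<close> iff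
  all its faces are, since every boundary simplex factors through a face.
  For the homotopy relations: composing a May homotopy \<open>y \<in> K\<^sub>n\<^sub>+\<^sub>1\<close> with the collapse
  \<open>\<Delta>[n] \<times> \<Delta>[1] \<rightarrow> \<Delta>[n+1]\<close> gives a homotopy rel \<open>\<partial>\<Delta>[n]\<close>; conversely, a homotopy rel
  boundary evaluated on the \<open>n + 1\<close> nondegenerate \<open>(n+1)\<close>-simplices of the prism yields a
  chain of simplices whose two non-constant faces are adjacent, and horn filling moves each
  pair of faces into May's position \<open>n, n + 1\<close>. So \<open>\<tau>\<^sub>n\<close> and \<open>\<pi>\<^sub>n\<close> have the same elements,
  unit and multiplication, and \<open>\<pi>\<^sub>n\<close> is a group by May's horn-filling arguments.\<close>

section \<open>Monotone maps and standard simplices\<close>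

definition codegeneracy :: "nat \<Rightarrow> nat \<Rightarrow> nat" where
  "codegeneracy j t = (if t \<le> j then t else t - 1)"

lemma simp_op_coface: "i \<le> Suc m \<Longrightarrow> simp_op (coface i) m (Suc m)"
  by (auto simp: simp_op_def coface_def)

lemma simp_op_codegeneracy: "j \<le> m \<Longrightarrow> simp_op (codegeneracy j) (Suc m) m"
  by (auto simp: simp_op_def codegeneracy_def)

lemma simp_op_const_zero: "simp_op (\<lambda>_. 0) m 0"
  by (simp add: simp_op_def)

lemma coface_codegeneracy: "t \<noteq> j \<Longrightarrow> coface j (codegeneracy j t) = t"
  by (auto simp: coface_def codegeneracy_def)

lemma simp_op_codegeneracy_comp:
  assumes f: "simp_op f k (Suc l)" and j: "j \<le> Suc l" and avoids: "\<forall>t\<le>k. f t \<noteq> j"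
  shows "simp_op (codegeneracy j \<circ> f) k l"
  unfolding simp_op_def
proof (intro conjI allI impI)
  fix a b assume "a \<le> b \<and> b \<le> k"
  then have "f a \<le> f b" using f unfolding simp_op_def by blast
  then show "(codegeneracy j \<circ> f) a \<le> (codegeneracy j \<circ> f) b"
    by (auto simp: codegeneracy_def)
next
  fix a assume "a \<le> k"
  then have "f a \<le> Suc l" "f a \<noteq> j" using f avoids unfolding simp_op_def by auto
  then show "(codegeneracy j \<circ> f) a \<le> l" using j by (auto simp: codegeneracy_def)
qed

lemma delta_simplices:
  "ss_sx (delta N) k = {xs. length xs = Suc k \<and> sorted xs \<and> (\<forall>i\<in>set xs. i \<le> N)}"
  by (simp add: delta_def)

lemma delta_act: "ss_act (delta N) f k' k xs = map (\<lambda>i. xs ! f i) [0..<Suc k']"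
  by (simp add: delta_def)

lemma delta_nth_le: "\<xi> \<in> ss_sx (delta N) k \<Longrightarrow> t \<le> k \<Longrightarrow> \<xi> ! t \<le> N"
  unfolding delta_simplices by (auto simp: less_Suc_eq_le)

lemma delta_nth_mono: "\<xi> \<in> ss_sx (delta N) k \<Longrightarrow> s \<le> t \<Longrightarrow> t \<le> k \<Longrightarrow> \<xi> ! s \<le> \<xi> ! t"
  unfolding delta_simplices by (auto simp: sorted_iff_nth_mono less_Suc_eq_le)

lemma simp_op_nth: "\<xi> \<in> ss_sx (delta N) k \<Longrightarrow> simp_op (\<lambda>t. \<xi> ! t) k N"
  unfolding simp_op_def using delta_nth_le delta_nth_mono by blast

lemma delta_act_closed:
  assumes f: "simp_op f k' k" and \<xi>: "\<xi> \<in> ss_sx (delta N) k"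
  shows "ss_act (delta N) f k' k \<xi> \<in> ss_sx (delta N) k'"
  using f delta_nth_le[OF \<xi>] delta_nth_mono[OF \<xi>]
  unfolding delta_act delta_simplices simp_op_def
  by (auto simp: sorted_iff_nth_mono less_Suc_eq_le simp del: upt_Suc)

lemma id_simplex: "[0..<Suc N] \<in> ss_sx (delta N) N"
  unfolding delta_simplices by (simp del: upt_Suc)

lemma not_degenerate_0: "\<not> degenerate X 0 x"
  unfolding degenerate_def by simp

lemma bdry_avoids: "\<xi> \<in> bdry N k \<Longrightarrow> \<exists>j\<le>N. \<forall>t\<le>k. \<xi> ! t \<noteq> j"
  unfolding bdry_def delta_simplices by (auto simp: subset_iff in_set_conv_nth less_Suc_eq_le)

lemma coface_list_bdry: "i \<le> Suc m \<Longrightarrow> map (coface i) [0..<Suc m] \<in> bdry (Suc m) m"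
  unfolding bdry_def delta_simplices
  by (auto simp: sorted_iff_nth_mono coface_def subset_iff simp del: upt_Suc)

lemma delta_adm_simps [simp]:
  "ss_sx (delta_adm k N) = ss_sx (delta N)" "ss_act (delta_adm k N) = ss_act (delta N)"
  by (simp_all add: delta_adm_def mk_strat_def)

lemma delta_adm_thin:
  assumes "k < N" "\<xi> \<in> ss_thin (delta_adm k N) l"
  shows "l \<noteq> 0 \<and> \<xi> \<in> ss_sx (delta_adm k N) l"
proof -
  have \<xi>: "\<xi> \<in> ss_sx (delta N) l"
    using assms(2) unfolding delta_adm_def mk_strat_def degenerate_def by auto
  moreover have "l \<noteq> 0"
  proof
    assume l: "l = 0"
    then have "k \<in> set \<xi>" "Suc k \<in> set \<xi>"
      using assms not_degenerate_0[of "delta N" \<xi>] unfolding delta_adm_def mk_strat_def by auto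
    moreover obtain t where "\<xi> = [t]" using \<xi> l unfolding delta_simplices by (auto simp: length_Suc_conv)
    ultimately show False by simp
  qed
  ultimately show ?thesis by simp
qed

text \<open>The collapse \<open>\<Delta>[N] \<times> \<Delta>[1] \<rightarrow> \<Delta>[N+1]\<close>, \<open>(i, 0) \<mapsto> i\<close>, \<open>(i, 1) \<mapsto> \<delta>\<^sup>N(i)\<close>:
  \<open>prism_collapse N \<xi> \<eta> t\<close> is the image of vertex \<open>t\<close> of the simplex \<open>(\<xi>, \<eta>)\<close>.\<close>
definition prism_collapse :: "nat \<Rightarrow> nat list \<Rightarrow> nat list \<Rightarrow> nat \<Rightarrow> nat" where
  "prism_collapse N \<xi> \<eta> t = (if \<eta> ! t \<noteq> 0 \<and> \<xi> ! t = N then Suc N else \<xi> ! t)"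

lemma simp_op_prism_collapse:
  assumes \<xi>: "\<xi> \<in> ss_sx (delta N) k" and \<eta>: "\<eta> \<in> ss_sx (delta 1) k"
  shows "simp_op (prism_collapse N \<xi> \<eta>) k (Suc N)"
  unfolding simp_op_def
proof (intro conjI allI impI)
  fix s t assume "s \<le> t \<and> t \<le> k"
  then have "\<xi> ! s \<le> \<xi> ! t" "\<eta> ! s \<le> \<eta> ! t" "\<xi> ! t \<le> N"
    using delta_nth_mono[OF \<xi>] delta_nth_mono[OF \<eta>] delta_nth_le[OF \<xi>] by auto
  then show "prism_collapse N \<xi> \<eta> s \<le> prism_collapse N \<xi> \<eta> t"
    unfolding prism_collapse_def by auto
next
  fix s assume "s \<le> k"
  then show "prism_collapse N \<xi> \<eta> s \<le> Suc N"
    using delta_nth_le[OF \<xi>] unfolding prism_collapse_def by fastforce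
qed

lemma prism_collapse_bottom:
  "\<xi> \<in> ss_sx (delta N) k \<Longrightarrow> t \<le> k \<Longrightarrow>
    prism_collapse N \<xi> (replicate (Suc k) 0) t = coface (Suc N) (\<xi> ! t)"
  using delta_nth_le[of \<xi> N k t]
  by (auto simp: prism_collapse_def coface_def nth_replicate less_Suc_eq_le simp del: replicate_Suc)

lemma prism_collapse_top:
  "\<xi> \<in> ss_sx (delta N) k \<Longrightarrow> t \<le> k \<Longrightarrow>
    prism_collapse N \<xi> (replicate (Suc k) 1) t = coface N (\<xi> ! t)"
  using delta_nth_le[of \<xi> N k t]
  by (auto simp: prism_collapse_def coface_def nth_replicate less_Suc_eq_le simp del: replicate_Suc)

definition cylinder :: "nat \<Rightarrow> (nat list \<times> nat list) ssset" where
  "cylinder N = sprod (delta_min N) (delta_t 1)"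

lemma cylinder_simplices: "ss_sx (cylinder N) k = ss_sx (delta N) k \<times> ss_sx (delta 1) k"
  by (simp add: cylinder_def sprod_def delta_min_def delta_t_def mk_strat_def)

lemma cylinder_act:
  "ss_act (cylinder N) f k' k p = (ss_act (delta N) f k' k (fst p), ss_act (delta 1) f k' k (snd p))"
  by (simp add: cylinder_def sprod_def delta_min_def delta_t_def mk_strat_def delta_def)

lemma cylinder_act_closed:
  "simp_op f k' k \<Longrightarrow> p \<in> ss_sx (cylinder N) k \<Longrightarrow> ss_act (cylinder N) f k' k p \<in> ss_sx (cylinder N) k'"
  unfolding cylinder_simplices cylinder_act using delta_act_closed by auto

lemma cylinder_thin:
  assumes "p \<in> ss_thin (cylinder N) k"
  shows "k \<noteq> 0 \<and> p \<in> ss_sx (cylinder N) k"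
proof -
  have \<xi>: "degenerate (delta N) k (fst p)"
    and \<eta>: "degenerate (delta 1) k (snd p) \<or> k = 1 \<and> snd p = [0..<Suc 1]"
    using assms by (auto simp: cylinder_def sprod_def delta_min_def delta_t_def mk_strat_def split: if_splits)
  have "fst p \<in> ss_sx (delta N) k" using \<xi> unfolding degenerate_def by blast
  moreover have "snd p \<in> ss_sx (delta 1) k"
    using \<eta> unfolding degenerate_def by (auto simp: delta_simplices)
  moreover have "k \<noteq> 0" using \<xi> by (metis not_degenerate_0)
  ultimately show ?thesis by (simp add: cylinder_simplices mem_Times_iff)
qed

definition delta1_step :: "nat \<Rightarrow> nat \<Rightarrow> nat list" where
  "delta1_step N j = map (\<lambda>t. if t < j then 0 else 1) [0..<Suc N]"

text \<open>The \<open>(N+1)\<close>-simplex \<open>(0,0), \<dots>, (j,0), (j,1), \<dots>, (N,1)\<close> of \<open>\<Delta>[N] \<times> \<Delta>[1]\<close>; for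
  \<open>j = 0, \<dots>, N\<close> these triangulate the prism.\<close>
definition prism_simplex :: "nat \<Rightarrow> nat \<Rightarrow> nat list \<times> nat list" where
  "prism_simplex N j = (map (codegeneracy j) [0..<Suc (Suc N)], delta1_step (Suc N) (Suc j))"

lemma delta1_step_simplex: "delta1_step N j \<in> ss_sx (delta 1) N"
  unfolding delta1_step_def delta_simplices by (auto simp: sorted_iff_nth_mono simp del: upt_Suc)

lemma delta1_step_0: "delta1_step N 0 = replicate (Suc N) 1"
  unfolding delta1_step_def by (simp add: map_replicate_const del: upt_Suc)

lemma delta1_step_last: "delta1_step N (Suc N) = replicate (Suc N) 0"
  unfolding delta1_step_def by (simp add: list_eq_iff_nth_eq del: upt_Suc replicate_Suc)

lemma prism_simplex_simplex: "j \<le> N \<Longrightarrow> prism_simplex N j \<in> ss_sx (cylinder N) (Suc N)"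
  unfolding prism_simplex_def cylinder_simplices delta1_step_def delta_simplices
  by (auto simp: sorted_iff_nth_mono codegeneracy_def simp del: upt_Suc)

lemma prism_simplex_face:
  assumes "i \<le> Suc N"
  shows "ss_act (cylinder N) (coface i) N (Suc N) (prism_simplex N j) =
    (map (codegeneracy j \<circ> coface i) [0..<Suc N], map (\<lambda>t. if coface i t < Suc j then 0 else 1) [0..<Suc N])"
  unfolding cylinder_act delta_act prism_simplex_def delta1_step_def
  using assms by (auto simp: coface_def nth_upt simp del: upt_Suc)

lemma prism_simplex_inner_face:
  assumes "i = j \<or> i = Suc j" "j \<le> N"
  shows "ss_act (cylinder N) (coface i) N (Suc N) (prism_simplex N j) = ([0..<Suc N], delta1_step N i)"
proof -
  have "map (codegeneracy j \<circ> coface i) [0..<Suc N] = [0..<Suc N]"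
    by (rule map_idI) (use assms(1) in \<open>auto simp: codegeneracy_def coface_def\<close>)
  moreover have "map (\<lambda>t. if coface i t < Suc j then 0 else 1) [0..<Suc N] = delta1_step N i"
    unfolding delta1_step_def by (rule map_cong) (use assms(1) in \<open>auto simp: coface_def\<close>)
  ultimately show ?thesis using prism_simplex_face[of i N j] assms by auto
qed

lemma prism_simplex_outer_face:
  assumes "i \<le> Suc N" "i \<noteq> j" "i \<noteq> Suc j" "j \<le> N"
  shows "fst (ss_act (cylinder N) (coface i) N (Suc N) (prism_simplex N j)) \<in> bdry N N"
proof -
  let ?q = "if i < j then i else i - 1"
  have "?q \<notin> set (map (codegeneracy j \<circ> coface i) [0..<Suc N])"
    using assms by (auto simp: codegeneracy_def coface_def simp del: upt_Suc split: if_splits)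
  moreover have "?q \<le> N" using assms by auto
  ultimately have "\<not> {..N} \<subseteq> set (map (codegeneracy j \<circ> coface i) [0..<Suc N])" by blast
  moreover have "ss_act (cylinder N) (coface i) N (Suc N) (prism_simplex N j) \<in> ss_sx (cylinder N) N"
    using cylinder_act_closed[OF simp_op_coface prism_simplex_simplex] assms by blast
  ultimately show ?thesis
    unfolding bdry_def prism_simplex_face[OF assms(1)] cylinder_simplices by (simp del: upt_Suc)
qed

lemma cylinder_id_face_bdry:
  assumes "i \<le> Suc M"
  shows "fst (ss_act (cylinder (Suc M)) (coface i) M (Suc M) ([0..<Suc (Suc M)], \<eta>)) \<in> bdry (Suc M) M"
proof -
  have "fst (ss_act (cylinder (Suc M)) (coface i) M (Suc M) ([0..<Suc (Suc M)], \<eta>)) = map (coface i) [0..<Suc M]"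
    unfolding cylinder_act delta_act using assms by (auto simp: coface_def nth_upt simp del: upt_Suc)
  then show ?thesis using coface_list_bdry[OF assms] by simp
qed

section \<open>Simplicial sets and Kan complexes\<close>

lemma th0_simps [simp]:
  "ss_sx (th0 K) = ss_sx K" "ss_act (th0 K) = ss_act K"
  "ss_thin (th0 K) k = (if k = 0 then {} else ss_sx K k)"
  by (simp_all add: th0_def mk_strat_def)

lemma th0_face [simp]: "ss_face (th0 K) = ss_face K"
  by (simp add: ss_face_def fun_eq_iff)

lemma th0_const [simp]: "ss_const (th0 K) = ss_const K"
  by (simp add: ss_const_def fun_eq_iff)

lemma th0_yon [simp]: "yon (th0 K) = yon K"
  by (simp add: yon_def fun_eq_iff)

lemma strat_map_th0_iff:
  assumes "\<And>k x. x \<in> ss_thin Y k \<Longrightarrow> k \<noteq> 0 \<and> x \<in> ss_sx Y k"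
  shows "strat_map Y (th0 K) F \<longleftrightarrow>
    (\<forall>k x. x \<in> ss_sx Y k \<longrightarrow> F k x \<in> ss_sx K k) \<and>
    (\<forall>f k' k x. simp_op f k' k \<and> x \<in> ss_sx Y k \<longrightarrow>
       F k' (ss_act Y f k' k x) = ss_act K f k' k (F k x))"
  using assms unfolding strat_map_def by auto

locale simplicial_set =
  fixes K :: "'a sset"
  assumes is_sset: "is_sset K"
begin

abbreviation "X \<equiv> ss_sx K"
abbreviation "act \<equiv> ss_act K"
abbreviation "face \<equiv> ss_face K"
abbreviation "cst \<equiv> ss_const K"

definition degen :: "nat \<Rightarrow> nat \<Rightarrow> 'a \<Rightarrow> 'a" where
  "degen j k x = act (codegeneracy j) (Suc k) k x"

definition has_faces :: "nat \<Rightarrow> 'a \<Rightarrow> (nat \<Rightarrow> 'a) \<Rightarrow> bool" where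
  "has_faces N y F \<longleftrightarrow> y \<in> X N \<and> (\<forall>i\<le>N. face i N y = F i)"

lemma has_facesD:
  assumes "has_faces N y F"
  shows "y \<in> X N" "i \<le> N \<Longrightarrow> face i N y = F i"
  using assms unfolding has_faces_def by auto

lemma act_closed: "simp_op f m k \<Longrightarrow> x \<in> X k \<Longrightarrow> act f m k x \<in> X m"
  using is_sset unfolding is_sset_def by blast

lemma act_act: "simp_op f m k \<Longrightarrow> simp_op g k l \<Longrightarrow> x \<in> X l \<Longrightarrow>
    act f m k (act g k l x) = act (g \<circ> f) m l x"
  using is_sset unfolding is_sset_def by metis

lemma act_cong: "(\<And>i. i \<le> m \<Longrightarrow> f i = f' i) \<Longrightarrow> x \<in> X k \<Longrightarrow> act f m k x = act f' m k x"
  using is_sset unfolding is_sset_def by blast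

lemma act_id:
  assumes "\<And>i. i \<le> k \<Longrightarrow> f i = i" "x \<in> X k"
  shows "act f k k x = x"
proof -
  have "act f k k x = act id k k x" by (rule act_cong) (simp_all add: assms)
  also have "\<dots> = x" using is_sset assms(2) unfolding is_sset_def by blast
  finally show ?thesis .
qed

lemma face_closed: "x \<in> X (Suc k) \<Longrightarrow> i \<le> Suc k \<Longrightarrow> face i (Suc k) x \<in> X k"
  unfolding ss_face_def using act_closed simp_op_coface by simp

lemma cst_closed: "v \<in> X 0 \<Longrightarrow> cst m v \<in> X m"
  unfolding ss_const_def by (rule act_closed[OF simp_op_const_zero])

lemma degen_closed: "x \<in> X k \<Longrightarrow> j \<le> k \<Longrightarrow> degen j k x \<in> X (Suc k)"
  unfolding degen_def by (rule act_closed[OF simp_op_codegeneracy])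

lemma act_cst: "simp_op g k l \<Longrightarrow> v \<in> X 0 \<Longrightarrow> act g k l (cst l v) = cst k v"
  unfolding ss_const_def by (simp add: act_act simp_op_const_zero comp_def)

lemma face_cst: "v \<in> X 0 \<Longrightarrow> i \<le> Suc k \<Longrightarrow> face i (Suc k) (cst (Suc k) v) = cst k v"
  unfolding ss_face_def by (simp add: act_cst simp_op_coface)

lemma degen_cst: "v \<in> X 0 \<Longrightarrow> j \<le> k \<Longrightarrow> degen j k (cst k v) = cst (Suc k) v"
  unfolding degen_def by (simp add: act_cst simp_op_codegeneracy)

lemma face_face:
  assumes "i < j" "j \<le> Suc (Suc l)" "x \<in> X (Suc (Suc l))"
  shows "face i (Suc l) (face j (Suc (Suc l)) x) = face (j - 1) (Suc l) (face i (Suc (Suc l)) x)"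
proof -
  have "face i (Suc l) (face j (Suc (Suc l)) x) = act (coface j \<circ> coface i) l (Suc (Suc l)) x"
    unfolding ss_face_def using assms by (simp add: act_act simp_op_coface)
  also have "\<dots> = act (coface i \<circ> coface (j - 1)) l (Suc (Suc l)) x"
    by (rule act_cong) (use assms in \<open>auto simp: coface_def\<close>)
  also have "\<dots> = face (j - 1) (Suc l) (face i (Suc (Suc l)) x)"
    unfolding ss_face_def using assms by (simp add: act_act simp_op_coface)
  finally show ?thesis .
qed

lemma face_of_face:
  assumes "i \<le> Suc l" "j \<le> Suc (Suc l)" "x \<in> X (Suc (Suc l))"
  shows "face i (Suc l) (face j (Suc (Suc l)) x) =
    (if i < j then face (j - 1) (Suc l) (face i (Suc (Suc l)) x)
     else face j (Suc l) (face (Suc i) (Suc (Suc l)) x))"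
  using face_face[of i j l x] face_face[of j "Suc i" l x] assms by auto

lemma face_degen:
  assumes x: "x \<in> X k" and j: "j \<le> k" and i: "i \<le> Suc k"
  shows "face i (Suc k) (degen j k x) =
    (if i = j \<or> i = Suc j then x
     else if i < j then degen (j - 1) (k - 1) (face i k x)
     else degen j (k - 1) (face (i - 1) k x))"
proof -
  have lhs: "face i (Suc k) (degen j k x) = act (codegeneracy j \<circ> coface i) k k x"
    unfolding ss_face_def degen_def using assms by (simp add: act_act simp_op_coface simp_op_codegeneracy)
  consider "i = j \<or> i = Suc j" | "i < j" | "Suc j < i"
    by linarith
  then show ?thesis
  proof cases
    case 1
    then show ?thesis
      unfolding lhs by (auto intro: act_id[OF _ x] simp: codegeneracy_def coface_def)
  next
    case 2
    then obtain l where k: "k = Suc l" using j by (cases k) auto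
    have "degen (j - 1) (k - 1) (face i k x) = act (coface i \<circ> codegeneracy (j - 1)) k k x"
      unfolding ss_face_def degen_def k using 2 j x k by (simp add: act_act simp_op_coface simp_op_codegeneracy)
    also have "\<dots> = act (codegeneracy j \<circ> coface i) k k x"
      by (rule act_cong[OF _ x]) (use 2 in \<open>auto simp: codegeneracy_def coface_def\<close>)
    finally show ?thesis unfolding lhs using 2 by simp
  next
    case 3
    then obtain l where k: "k = Suc l" using i by (cases k) auto
    have "degen j (k - 1) (face (i - 1) k x) = act (coface (i - 1) \<circ> codegeneracy j) k k x"
      unfolding ss_face_def degen_def k using 3 i j x k by (simp add: act_act simp_op_coface simp_op_codegeneracy)
    also have "\<dots> = act (codegeneracy j \<circ> coface i) k k x"
      by (rule act_cong[OF _ x]) (use 3 in \<open>auto simp: codegeneracy_def coface_def\<close>)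
    finally show ?thesis unfolding lhs using 3 by simp
  qed
qed

lemma act_avoiding_face:
  assumes x: "x \<in> X (Suc l)" and j: "j \<le> Suc l"
    and f: "simp_op f k (Suc l)" and avoids: "\<forall>t\<le>k. f t \<noteq> j"
  shows "act f k (Suc l) x = act (codegeneracy j \<circ> f) k l (face j (Suc l) x)"
proof -
  have "act (codegeneracy j \<circ> f) k l (face j (Suc l) x) = act (coface j \<circ> (codegeneracy j \<circ> f)) k (Suc l) x"
    unfolding ss_face_def
    using act_act[OF simp_op_codegeneracy_comp[OF f j avoids] simp_op_coface[OF j] x] by simp
  also have "\<dots> = act f k (Suc l) x"
    by (rule act_cong[OF _ x]) (use avoids in \<open>simp add: coface_codegeneracy\<close>)
  finally show ?thesis by simp
qed

lemma act_avoiding_const_face: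
  assumes "x \<in> X (Suc l)" "j \<le> Suc l" "simp_op f k (Suc l)" "\<forall>t\<le>k. f t \<noteq> j"
    and "face j (Suc l) x = cst l v" "v \<in> X 0"
  shows "act f k (Suc l) x = cst k v"
  using assms by (simp add: act_avoiding_face act_cst simp_op_codegeneracy_comp)

lemma yon_closed: "\<theta> \<in> X N \<Longrightarrow> \<xi> \<in> ss_sx (delta N) k \<Longrightarrow> yon K N \<theta> k \<xi> \<in> X k"
  unfolding yon_def by (rule act_closed[OF simp_op_nth])

lemma yon_natural:
  assumes f: "simp_op f k' k" and \<xi>: "\<xi> \<in> ss_sx (delta N) k" and \<theta>: "\<theta> \<in> X N"
  shows "yon K N \<theta> k' (ss_act (delta N) f k' k \<xi>) = act f k' k (yon K N \<theta> k \<xi>)"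
proof -
  have "act f k' k (yon K N \<theta> k \<xi>) = act ((\<lambda>i. \<xi> ! i) \<circ> f) k' N \<theta>"
    unfolding yon_def using act_act[OF f simp_op_nth[OF \<xi>] \<theta>] .
  also have "\<dots> = yon K N \<theta> k' (ss_act (delta N) f k' k \<xi>)"
    unfolding yon_def delta_act
    by (rule act_cong[OF _ \<theta>]) (auto simp: less_Suc_eq_le simp del: upt_Suc)
  finally show ?thesis by simp
qed

lemma yon_id: "x \<in> X N \<Longrightarrow> yon K N x N [0..<Suc N] = x"
  unfolding yon_def by (rule act_id) (auto simp: nth_upt simp del: upt_Suc)

definition prism_map :: "nat \<Rightarrow> 'a \<Rightarrow> nat \<Rightarrow> nat list \<times> nat list \<Rightarrow> 'a" where
  "prism_map N y k p = act (prism_collapse N (fst p) (snd p)) k (Suc N) y"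

lemma strat_map_prism_map:
  assumes y: "y \<in> X (Suc N)"
  shows "strat_map (cylinder N) (th0 K) (prism_map N y)"
proof -
  have closed: "prism_map N y k p \<in> X k" if "p \<in> ss_sx (cylinder N) k" for k p
    unfolding prism_map_def
    using that act_closed[OF simp_op_prism_collapse y] by (simp add: cylinder_simplices mem_Times_iff)
  have "prism_map N y k' (ss_act (cylinder N) f k' k p) = act f k' k (prism_map N y k p)"
    if f: "simp_op f k' k" and p: "p \<in> ss_sx (cylinder N) k" for f k' k p
  proof -
    have "act f k' k (prism_map N y k p) = act (prism_collapse N (fst p) (snd p) \<circ> f) k' (Suc N) y"
      unfolding prism_map_def
      using p act_act[OF f simp_op_prism_collapse y] by (simp add: cylinder_simplices mem_Times_iff)
    also have "\<dots> = prism_map N y k' (ss_act (cylinder N) f k' k p)"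
      unfolding prism_map_def cylinder_act delta_act
      by (rule act_cong[OF _ y]) (auto simp: prism_collapse_def less_Suc_eq_le simp del: upt_Suc)
    finally show ?thesis by simp
  qed
  then show ?thesis
    using closed by (subst strat_map_th0_iff) (auto dest: cylinder_thin)
qed

lemma prism_map_bottom:
  assumes y: "y \<in> X (Suc N)" and \<xi>: "\<xi> \<in> ss_sx (delta N) k"
  shows "prism_map N y k (\<xi>, replicate (Suc k) 0) = yon K N (face (Suc N) (Suc N) y) k \<xi>"
proof -
  have "prism_map N y k (\<xi>, replicate (Suc k) 0) = act (coface (Suc N) \<circ> (\<lambda>t. \<xi> ! t)) k (Suc N) y"
    unfolding prism_map_def by (rule act_cong[OF _ y]) (use prism_collapse_bottom[OF \<xi>] in auto)
  then show ?thesis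
    unfolding yon_def ss_face_def using act_act[OF simp_op_nth[OF \<xi>] simp_op_coface y] by simp
qed

lemma prism_map_top:
  assumes y: "y \<in> X (Suc N)" and \<xi>: "\<xi> \<in> ss_sx (delta N) k"
  shows "prism_map N y k (\<xi>, replicate (Suc k) 1) = yon K N (face N (Suc N) y) k \<xi>"
proof -
  have "prism_map N y k (\<xi>, replicate (Suc k) 1) = act (coface N \<circ> (\<lambda>t. \<xi> ! t)) k (Suc N) y"
    unfolding prism_map_def by (rule act_cong[OF _ y]) (use prism_collapse_top[OF \<xi>] in auto)
  then show ?thesis
    unfolding yon_def ss_face_def using act_act[OF simp_op_nth[OF \<xi>] simp_op_coface y] by simp
qed

end

locale kan = simplicial_set +
  assumes kan_complex: "kan_complex K"
begin

lemma horn_filler: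
  assumes "k \<le> Suc M"
    and "\<And>i. i \<le> Suc M \<Longrightarrow> i \<noteq> k \<Longrightarrow> x i \<in> X M"
    and "\<And>i j. i < j \<Longrightarrow> j \<le> Suc M \<Longrightarrow> i \<noteq> k \<Longrightarrow> j \<noteq> k \<Longrightarrow>
           face i M (x j) = face (j - 1) M (x i)"
  obtains w where "w \<in> X (Suc M)" "\<And>i. i \<le> Suc M \<Longrightarrow> i \<noteq> k \<Longrightarrow> face i (Suc M) w = x i"
  using kan_complex assms unfolding kan_complex_def by (metis diff_Suc_1 le_add1 plus_1_eq_Suc)

lemma horn_missing_face:
  assumes k: "k \<le> Suc (Suc l)"
    and horn: "\<And>i. i \<le> Suc (Suc l) \<Longrightarrow> i \<noteq> k \<Longrightarrow> x i \<in> X (Suc l)"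
    and compatible: "\<And>i j. i < j \<Longrightarrow> j \<le> Suc (Suc l) \<Longrightarrow> i \<noteq> k \<Longrightarrow> j \<noteq> k \<Longrightarrow>
           face i (Suc l) (x j) = face (j - 1) (Suc l) (x i)"
    and F: "\<And>i. i \<le> Suc l \<Longrightarrow>
           F i = (if i < k then face (k - 1) (Suc l) (x i) else face k (Suc l) (x (Suc i)))"
  shows "\<exists>u. has_faces (Suc l) u F"
proof -
  obtain w where w: "w \<in> X (Suc (Suc l))"
    and faces: "\<And>i. i \<le> Suc (Suc l) \<Longrightarrow> i \<noteq> k \<Longrightarrow> face i (Suc (Suc l)) w = x i"
    using horn_filler[OF k horn compatible] by blast
  have "has_faces (Suc l) (face k (Suc (Suc l)) w) F"
    unfolding has_faces_def using face_closed[OF w k] face_of_face[OF _ k w] faces F by auto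
  then show ?thesis ..
qed

end

section \<open>May's homotopy groups\<close>

locale pointed_kan = kan +
  fixes v :: 'a and m :: nat
  assumes base_point: "v \<in> X 0"
begin

abbreviation "n \<equiv> Suc m"
abbreviation "star k \<equiv> cst k v"
abbreviation "S \<equiv> pi_sphere K v n"

lemma star_closed [simp]: "star k \<in> X k"
  using cst_closed base_point by simp

lemma face_star [simp]: "i \<le> Suc k \<Longrightarrow> face i (Suc k) (star (Suc k)) = star k"
  using face_cst base_point by simp

lemma sphere_iff: "x \<in> S \<longleftrightarrow> x \<in> X n \<and> (\<forall>i\<le>n. face i n x = star m)"
  unfolding pi_sphere_def by simp

lemma star_sphere [simp]: "star n \<in> S"
  unfolding sphere_iff by simp

lemma has_faces_degen_sphere:
  assumes a: "a \<in> S" and j: "j \<le> n"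
  shows "has_faces (Suc n) (degen j n a) (\<lambda>i. if i = j \<or> i = Suc j then a else star n)"
proof -
  have "a \<in> X n" and "\<And>i. i \<le> n \<Longrightarrow> face i n a = star m"
    using a sphere_iff by auto
  then show ?thesis
    unfolding has_faces_def
    using face_degen j degen_closed degen_cst[OF base_point, of "j - 1" m] degen_cst[OF base_point, of j m]
    by auto
qed

lemma face_in_sphere:
  assumes z: "z \<in> X (Suc n)" and k: "k \<le> Suc n"
    and others: "\<And>i. i \<le> Suc n \<Longrightarrow> i \<noteq> k \<Longrightarrow> face i (Suc n) z \<in> S"
  shows "face k (Suc n) z \<in> S"
proof -
  have "face i n (face k (Suc n) z) = star m" if i: "i \<le> n" for i
  proof (cases "i < k")
    case True
    then show ?thesis using face_of_face[of i m k z] others[of i] i k z by (simp add: sphere_iff)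
  next
    case False
    then show ?thesis using face_of_face[of i m k z] others[of "Suc i"] i k z by (simp add: sphere_iff)
  qed
  then show ?thesis unfolding sphere_iff using face_closed[OF z k] by simp
qed

definition htpy_at :: "nat \<Rightarrow> 'a \<Rightarrow> 'a \<Rightarrow> bool" where
  "htpy_at j a b \<longleftrightarrow>
     (\<exists>y. has_faces (Suc n) y (\<lambda>i. if i = j then a else if i = Suc j then b else star n))"

lemma pi_htpy_iff: "pi_htpy K v n a b \<longleftrightarrow> htpy_at n a b"
  unfolding pi_htpy_def htpy_at_def has_faces_def
  by (intro iffI; elim bexE exE conjE; intro bexI exI conjI) (auto simp: le_Suc_eq)

lemma htpy_at_refl: "a \<in> S \<Longrightarrow> j \<le> n \<Longrightarrow> htpy_at j a a"
  unfolding htpy_at_def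
  by (intro exI[of _ "degen j n a"]) (use has_faces_degen_sphere[of a j] in \<open>auto simp: has_faces_def\<close>)

lemma htpy_euclid:
  assumes "htpy_at n x x'" "htpy_at n x x''"
  shows "htpy_at n x' x''"
proof -
  obtain y y' where
    y: "has_faces (Suc n) y (\<lambda>i. if i = n then x else if i = Suc n then x' else star n)" and
    y': "has_faces (Suc n) y' (\<lambda>i. if i = n then x else if i = Suc n then x'' else star n)"
    using assms unfolding htpy_at_def by blast
  define h where "h i = (if i < n then star (Suc n) else if i = n then y else y')" for i
  show ?thesis unfolding htpy_at_def
    by (rule horn_missing_face[of "Suc (Suc n)" _ h])
       (auto simp: h_def has_facesD[OF y] has_facesD[OF y'])
qed

lemma htpy_sym: "x \<in> S \<Longrightarrow> htpy_at n x x' \<Longrightarrow> htpy_at n x' x"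
  using htpy_euclid htpy_at_refl by blast

lemma htpy_trans: "x \<in> S \<Longrightarrow> htpy_at n x y \<Longrightarrow> htpy_at n y z \<Longrightarrow> htpy_at n x z"
  using htpy_euclid htpy_sym by blast

lemma htpy_sphere:
  assumes "x \<in> S" "htpy_at n x x'"
  shows "x' \<in> S"
proof -
  obtain y where y: "has_faces (Suc n) y (\<lambda>i. if i = n then x else if i = Suc n then x' else star n)"
    using assms(2) unfolding htpy_at_def by blast
  have "face (Suc n) (Suc n) y \<in> S"
    by (rule face_in_sphere) (use assms(1) has_facesD[OF y] in auto)
  then show ?thesis using has_facesD[OF y] by simp
qed

definition pi_prod :: "'a \<Rightarrow> 'a \<Rightarrow> 'a \<Rightarrow> bool" where
  "pi_prod x y p \<longleftrightarrow> (\<exists>z. has_faces (Suc n) z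
     (\<lambda>i. if i < m then star n else if i = m then x else if i = n then p else y))"

lemma pi_prod_iff:
  "pi_prod x y p \<longleftrightarrow> (\<exists>z\<in>X (Suc n). (\<forall>i<m. face i (Suc n) z = star n) \<and>
     face m (Suc n) z = x \<and> face (Suc n) (Suc n) z = y \<and> face n (Suc n) z = p)"
  unfolding pi_prod_def has_faces_def
  by (intro iffI; elim bexE exE conjE; intro bexI exI conjI) (auto simp: le_Suc_eq)

lemma pi_prod_sphere:
  assumes "x \<in> S" "y \<in> S" "pi_prod x y p"
  shows "p \<in> S"
proof -
  obtain z where z: "has_faces (Suc n) z
      (\<lambda>i. if i < m then star n else if i = m then x else if i = n then p else y)"
    using assms(3) unfolding pi_prod_def by blast
  have "face n (Suc n) z \<in> S"
    by (rule face_in_sphere) (use assms(1,2) has_facesD[OF z] in auto)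
  then show ?thesis using has_facesD[OF z] by simp
qed

lemma pi_prod_exists:
  assumes x: "x \<in> S" and y: "y \<in> S"
  shows "\<exists>p. pi_prod x y p"
proof -
  define h where "h i = (if i < m then star n else if i = m then x else y)" for i
  obtain w where w: "w \<in> X (Suc n)" "\<And>i. i \<le> Suc n \<Longrightarrow> i \<noteq> n \<Longrightarrow> face i (Suc n) w = h i"
    by (rule horn_filler[of n n h]) (use x y in \<open>auto simp: h_def sphere_iff\<close>)
  have "pi_prod x y (face n (Suc n) w)"
    unfolding pi_prod_def has_faces_def using w by (auto simp: h_def)
  then show ?thesis ..
qed

lemma pi_prod_htpy_left:
  assumes "htpy_at n x x'" "pi_prod x y p" "pi_prod x' y p'"
  shows "htpy_at n p p'"
proof -
  obtain g where g: "has_faces (Suc n) g (\<lambda>i. if i = n then x else if i = Suc n then x' else star n)"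
    using assms(1) unfolding htpy_at_def by blast
  obtain z where z: "has_faces (Suc n) z
      (\<lambda>i. if i < m then star n else if i = m then x else if i = n then p else y)"
    using assms(2) unfolding pi_prod_def by blast
  obtain z' where z': "has_faces (Suc n) z'
      (\<lambda>i. if i < m then star n else if i = m then x' else if i = n then p' else y)"
    using assms(3) unfolding pi_prod_def by blast
  define h where
    "h i = (if i < m then star (Suc n) else if i = m then g else if i = Suc n then z else z')" for i
  show ?thesis unfolding htpy_at_def
    by (rule horn_missing_face[of n _ h])
       (auto simp: h_def has_facesD[OF g] has_facesD[OF z] has_facesD[OF z'])
qed

lemma pi_prod_htpy_right:
  assumes x: "x \<in> S" and "htpy_at n y y'" "pi_prod x y p"
  shows "pi_prod x y' p"
proof -
  obtain g where g: "has_faces (Suc n) g (\<lambda>i. if i = n then y else if i = Suc n then y' else star n)"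
    using assms(2) unfolding htpy_at_def by blast
  obtain z where z: "has_faces (Suc n) z
      (\<lambda>i. if i < m then star n else if i = m then x else if i = n then p else y)"
    using assms(3) unfolding pi_prod_def by blast
  note d = has_faces_degen_sphere[OF x, of m]
  define h where
    "h i = (if i < m then star (Suc n) else if i = m then degen m n x else if i = n then z else g)" for i
  show ?thesis unfolding pi_prod_def
    by (rule horn_missing_face[of "Suc n" _ h])
       (auto simp: h_def has_facesD[OF g] has_facesD[OF z] has_facesD[OF d])
qed

lemma pi_prod_assoc:
  assumes "pi_prod x y p" "pi_prod y w q" "pi_prod p w r"
  shows "pi_prod x q r"
proof -
  obtain z1 where z1: "has_faces (Suc n) z1
      (\<lambda>i. if i < m then star n else if i = m then x else if i = n then p else y)"
    using assms(1) unfolding pi_prod_def by blast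
  obtain z2 where z2: "has_faces (Suc n) z2
      (\<lambda>i. if i < m then star n else if i = m then y else if i = n then q else w)"
    using assms(2) unfolding pi_prod_def by blast
  obtain z3 where z3: "has_faces (Suc n) z3
      (\<lambda>i. if i < m then star n else if i = m then p else if i = n then r else w)"
    using assms(3) unfolding pi_prod_def by blast
  define h where
    "h i = (if i < m then star (Suc n) else if i = m then z1 else if i = Suc n then z3 else z2)" for i
  show ?thesis unfolding pi_prod_def
    by (rule horn_missing_face[of n _ h])
       (auto simp: h_def has_facesD[OF z1] has_facesD[OF z2] has_facesD[OF z3])
qed

lemma pi_prod_unit_left: "x \<in> S \<Longrightarrow> pi_prod (star n) x x"
  unfolding pi_prod_def
  by (intro exI[of _ "degen n n x"]) (use has_faces_degen_sphere[of x n] in \<open>auto simp: has_faces_def\<close>)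

lemma pi_prod_inverse:
  assumes x: "x \<in> S"
  shows "\<exists>x'\<in>S. pi_prod x' x (star n)"
proof -
  define h where "h i = (if i = Suc n then x else star n)" for i
  obtain w where w: "w \<in> X (Suc n)" "\<And>i. i \<le> Suc n \<Longrightarrow> i \<noteq> m \<Longrightarrow> face i (Suc n) w = h i"
    by (rule horn_filler[of m n h]) (use x in \<open>auto simp: h_def sphere_iff\<close>)
  have "face m (Suc n) w \<in> S"
    by (rule face_in_sphere) (use w x in \<open>auto simp: h_def\<close>)
  moreover have "pi_prod (face m (Suc n) w) x (star n)"
    unfolding pi_prod_def has_faces_def using w by (auto simp: h_def)
  ultimately show ?thesis ..
qed

abbreviation "cls \<equiv> pi_cls K v n"
abbreviation "G \<equiv> pi_group K v n"

lemma mem_cls: "x' \<in> cls x \<longleftrightarrow> x' \<in> S \<and> htpy_at n x x'"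
  unfolding pi_cls_def pi_htpy_iff by simp

lemma cls_self: "x \<in> S \<Longrightarrow> x \<in> cls x"
  using mem_cls htpy_at_refl by simp

lemma cls_eq: "x \<in> S \<Longrightarrow> htpy_at n x x' \<Longrightarrow> cls x' = cls x"
  unfolding pi_cls_def pi_htpy_iff using htpy_sphere htpy_sym htpy_trans by blast

lemma pi_group_mult:
  assumes x: "x \<in> S" and y: "y \<in> S" and p: "pi_prod x y p"
  shows "mult G (cls x) (cls y) = cls p"
  unfolding pi_group_def monoid.simps
proof (rule the_equality)
  obtain z where "z \<in> X (Suc n)" "\<forall>i<m. face i (Suc n) z = star n"
    "face m (Suc n) z = x" "face (Suc n) (Suc n) z = y" "face n (Suc n) z = p"
    using p pi_prod_iff by blast
  then show "\<exists>x'\<in>cls x. \<exists>y'\<in>cls y. \<exists>z\<in>X (Suc n). (\<forall>i<n - 1. face i (Suc n) z = star n) \<and>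
      face (n - 1) (Suc n) z = x' \<and> face (Suc n) (Suc n) z = y' \<and> cls p = cls (face n (Suc n) z)"
    using cls_self x y by auto
next
  fix C
  assume "\<exists>x'\<in>cls x. \<exists>y'\<in>cls y. \<exists>z\<in>X (Suc n). (\<forall>i<n - 1. face i (Suc n) z = star n) \<and>
      face (n - 1) (Suc n) z = x' \<and> face (Suc n) (Suc n) z = y' \<and> C = cls (face n (Suc n) z)"
  then obtain x' y' z where "x' \<in> cls x" "y' \<in> cls y" and z: "z \<in> X (Suc n)"
    "\<forall>i<m. face i (Suc n) z = star n" "face m (Suc n) z = x'" "face (Suc n) (Suc n) z = y'"
    and C: "C = cls (face n (Suc n) z)"
    by auto
  then have "htpy_at n x x'" "htpy_at n y y'" and "pi_prod x' y' (face n (Suc n) z)"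
    using mem_cls pi_prod_iff by auto
  then have "htpy_at n p (face n (Suc n) z)"
    using pi_prod_htpy_left pi_prod_htpy_right[OF x _ p] by blast
  then show "C = cls p"
    using C cls_eq pi_prod_sphere[OF x y p] by simp
qed

lemma pi_group_carrier: "carrier G = cls ` S"
  unfolding pi_group_def by simp

lemma pi_group_one: "one G = cls (star n)"
  unfolding pi_group_def by simp

lemma group_pi_group: "group G"
proof (rule groupI)
  fix A B
  assume "A \<in> carrier G" "B \<in> carrier G"
  then obtain x y where x: "x \<in> S" "A = cls x" and y: "y \<in> S" "B = cls y"
    by (auto simp: pi_group_carrier)
  obtain p where p: "pi_prod x y p" using pi_prod_exists x y by blast
  show "mult G A B \<in> carrier G"
    using pi_group_mult[OF x(1) y(1) p] pi_prod_sphere[OF x(1) y(1) p] x y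
    by (simp add: pi_group_carrier)
next
  show "one G \<in> carrier G" by (simp add: pi_group_carrier pi_group_one)
next
  fix A B C
  assume "A \<in> carrier G" "B \<in> carrier G" "C \<in> carrier G"
  then obtain x y w where x: "x \<in> S" "A = cls x" and y: "y \<in> S" "B = cls y"
    and w: "w \<in> S" "C = cls w"
    by (auto simp: pi_group_carrier)
  obtain p q r where p: "pi_prod x y p" and q: "pi_prod y w q" and r: "pi_prod p w r"
    using pi_prod_exists pi_prod_sphere x y w by metis
  have pS: "p \<in> S" and qS: "q \<in> S" using pi_prod_sphere x y w p q by blast+
  show "mult G (mult G A B) C = mult G A (mult G B C)"
    using pi_group_mult[OF x(1) y(1) p] pi_group_mult[OF y(1) w(1) q] pi_group_mult[OF pS w(1) r]
      pi_group_mult[OF x(1) qS pi_prod_assoc[OF p q r]] x y w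
    by simp
next
  fix A
  assume "A \<in> carrier G"
  then obtain x where x: "x \<in> S" "A = cls x" by (auto simp: pi_group_carrier)
  then show "mult G (one G) A = A"
    using pi_group_mult[OF star_sphere x(1) pi_prod_unit_left[OF x(1)]] by (simp add: pi_group_one)
next
  fix A
  assume "A \<in> carrier G"
  then obtain x where x: "x \<in> S" "A = cls x" by (auto simp: pi_group_carrier)
  obtain x' where "x' \<in> S" "pi_prod x' x (star n)" using pi_prod_inverse x by blast
  then show "\<exists>B\<in>carrier G. mult G B A = one G"
    using pi_group_mult[OF _ x(1)] x by (auto simp: pi_group_carrier pi_group_one)
qed

end

section \<open>Comparison with the homotopy monoid of \<open>th\<^sub>0(K)\<close>\<close>

context pointed_kan
begin

lemma tau_witness_iff:
  "tau_witness (th0 K) v n a b \<theta> \<longleftrightarrow> \<theta> \<in> X (Suc n) \<and> face m (Suc n) \<theta> = a \<and>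
     face (Suc n) (Suc n) \<theta> = b \<and> (\<forall>i<m. face i (Suc n) \<theta> = star n)"
proof -
  have "strat_map (delta_adm n (Suc n)) (th0 K) (yon K (Suc n) \<theta>)" if "\<theta> \<in> X (Suc n)"
    using that yon_closed yon_natural by (subst strat_map_th0_iff) (auto dest: delta_adm_thin[OF lessI])
  moreover have "(\<forall>i\<le>Suc n. i \<notin> {n - 1, n, Suc n} \<longrightarrow> face i (Suc n) \<theta> = star n) \<longleftrightarrow>
      (\<forall>i<m. face i (Suc n) \<theta> = star n)"
    by auto
  ultimately show ?thesis unfolding tau_witness_def by auto
qed

lemma yon_sphere_bdry:
  assumes a: "a \<in> S" and \<xi>: "\<xi> \<in> bdry n k"
  shows "yon K n a k \<xi> = star k"
proof -
  obtain j where "j \<le> n" "\<forall>t\<le>k. \<xi> ! t \<noteq> j" using bdry_avoids[OF \<xi>] by blast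
  moreover have "simp_op (\<lambda>t. \<xi> ! t) k n" using \<xi> simp_op_nth unfolding bdry_def by blast
  ultimately show ?thesis
    unfolding yon_def using a act_avoiding_const_face[of a m j] base_point by (simp add: sphere_iff)
qed

lemma tau_sphere_eq: "tau_sphere (th0 K) v n = S"
proof (intro equalityI subsetI)
  fix a assume "a \<in> S"
  then show "a \<in> tau_sphere (th0 K) v n"
    unfolding tau_sphere_def using yon_sphere_bdry sphere_iff by auto
next
  fix a assume a: "a \<in> tau_sphere (th0 K) v n"
  have "face i n a = star m" if i: "i \<le> n" for i
  proof -
    have "face i n a = yon K n a m (map (coface i) [0..<Suc m])"
      unfolding ss_face_def yon_def diff_Suc_1
      by (rule act_cong) (use a in \<open>auto simp: tau_sphere_def less_Suc_eq_le simp del: upt_Suc\<close>)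
    also have "\<dots> = star m"
      using a coface_list_bdry[OF i] unfolding tau_sphere_def by simp
    finally show ?thesis .
  qed
  then show "a \<in> S" using a unfolding sphere_iff tau_sphere_def by simp
qed

text \<open>Fill the horn formed by the degeneracies \<open>s\<^sub>j a\<close>, \<open>s\<^sub>j\<^sub>+\<^sub>1 a\<close>, the given simplex and
  the base point; the missing face moves the pair \<open>a, b\<close> one position up.\<close>
lemma htpy_at_Suc:
  assumes a: "a \<in> S" and j: "j < n" and "htpy_at j a b"
  shows "htpy_at (Suc j) a b"
proof -
  obtain y where y: "has_faces (Suc n) y (\<lambda>i. if i = j then a else if i = Suc j then b else star n)"
    using assms(3) unfolding htpy_at_def by blast
  define h where "h i = (if i = j then degen (Suc j) n a else if i = Suc (Suc j) then degen j n a
     else if i = Suc (Suc (Suc j)) then y else star (Suc n))" for i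
  show ?thesis unfolding htpy_at_def
    by (rule horn_missing_face[of "Suc j" _ h])
       (use j in \<open>auto simp: h_def has_facesD[OF y] has_facesD[OF has_faces_degen_sphere[OF a]]\<close>)
qed

lemma htpy_at_imp_htpy:
  assumes "j \<le> n" "a \<in> S" "htpy_at j a b"
  shows "htpy_at n a b"
proof -
  have "htpy_at j a b \<longrightarrow> htpy_at n a b"
    using assms(1) by (induction j rule: inc_induct) (use htpy_at_Suc assms(2) in auto)
  then show ?thesis using assms(3) by simp
qed

lemma prism_map_bdry:
  assumes a: "a \<in> S"
    and y: "has_faces (Suc n) y (\<lambda>i. if i = n then b else if i = Suc n then a else star n)"
    and \<xi>: "\<xi> \<in> bdry n k" and \<eta>: "\<eta> \<in> ss_sx (delta 1) k"
  shows "prism_map n y k (\<xi>, \<eta>) = star k"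
proof -
  have \<xi>\<Delta>: "\<xi> \<in> ss_sx (delta n) k" using \<xi> unfolding bdry_def by simp
  obtain j where j: "j \<le> n" and avoids: "\<forall>t\<le>k. \<xi> ! t \<noteq> j" using bdry_avoids[OF \<xi>] by blast
  show ?thesis
  proof (cases "j < n")
    case True
    then have "\<forall>t\<le>k. prism_collapse n \<xi> \<eta> t \<noteq> j" using avoids by (auto simp: prism_collapse_def)
    moreover have "face j (Suc n) y = star n" using has_facesD(2)[OF y, of j] True by simp
    ultimately show ?thesis
      unfolding prism_map_def fst_conv snd_conv using True
      by (intro act_avoiding_const_face[OF has_facesD(1)[OF y] _ simp_op_prism_collapse[OF \<xi>\<Delta> \<eta>]]
          base_point) simp_all
  next
    case False
    then have "\<forall>t\<le>k. \<xi> ! t \<noteq> n" using avoids j by simp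
    then have "prism_map n y k (\<xi>, \<eta>) = prism_map n y k (\<xi>, replicate (Suc k) 0)"
      unfolding prism_map_def
      by (intro act_cong has_facesD(1)[OF y]) (simp add: prism_collapse_def)
    also have "\<dots> = yon K n a k \<xi>"
      using prism_map_bottom[OF has_facesD(1)[OF y] \<xi>\<Delta>] has_facesD(2)[OF y] by simp
    also have "\<dots> = star k" using yon_sphere_bdry[OF a \<xi>] .
    finally show ?thesis .
  qed
qed

lemma tau_htpy_of_htpy:
  assumes a: "a \<in> S" and "htpy_at n a b"
  shows "tau_htpy (th0 K) n a b"
proof -
  obtain y where y: "has_faces (Suc n) y (\<lambda>i. if i = n then b else if i = Suc n then a else star n)"
    using htpy_sym[OF a assms(2)] unfolding htpy_at_def by blast
  note yX = has_facesD(1)[OF y] and yfaces = has_facesD(2)[OF y]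
  show ?thesis
    unfolding tau_htpy_def th0_yon cylinder_def[symmetric]
    using strat_map_prism_map[OF yX] prism_map_bottom[OF yX] prism_map_top[OF yX]
      prism_map_bdry[OF a y] yon_sphere_bdry[OF a] yfaces
    by (intro exI[of _ "prism_map n y"]) auto
qed

context
  fixes a b :: 'a and H :: "nat \<Rightarrow> nat list \<times> nat list \<Rightarrow> 'a"
  assumes a: "a \<in> S" and b: "b \<in> S"
    and H: "strat_map (cylinder n) (th0 K) H"
    and H_ends: "\<And>k \<xi>. \<xi> \<in> ss_sx (delta n) k \<Longrightarrow>
       H k (\<xi>, replicate (Suc k) 0) = yon K n a k \<xi> \<and> H k (\<xi>, replicate (Suc k) 1) = yon K n b k \<xi>"
    and H_rel_bdry: "\<And>k \<xi> \<eta>. \<xi> \<in> bdry n k \<Longrightarrow> \<eta> \<in> ss_sx (delta 1) k \<Longrightarrow> H k (\<xi>, \<eta>) = yon K n a k \<xi>"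
begin

lemma H_closed: "p \<in> ss_sx (cylinder n) k \<Longrightarrow> H k p \<in> X k"
  using H unfolding strat_map_def th0_simps by blast

lemma H_face:
  assumes "i \<le> Suc k" "p \<in> ss_sx (cylinder n) (Suc k)"
  shows "face i (Suc k) (H (Suc k) p) = H k (ss_act (cylinder n) (coface i) k (Suc k) p)"
proof -
  have "H k (ss_act (cylinder n) (coface i) k (Suc k) p) = act (coface i) k (Suc k) (H (Suc k) p)"
    using H assms(2) simp_op_coface[OF assms(1)] unfolding strat_map_def th0_simps by blast
  then show ?thesis unfolding ss_face_def by simp
qed

lemma H_bdry: "fst p \<in> bdry n k \<Longrightarrow> snd p \<in> ss_sx (delta 1) k \<Longrightarrow> H k p = star k"
  using H_rel_bdry[of "fst p" k "snd p"] yon_sphere_bdry[OF a] by simp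

lemma H_slice_sphere: "H n ([0..<Suc n], delta1_step n j) \<in> S"
proof -
  let ?p = "([0..<Suc n], delta1_step n j)"
  have p: "?p \<in> ss_sx (cylinder n) n"
    using id_simplex delta1_step_simplex by (simp add: cylinder_simplices del: upt_Suc)
  have "face i n (H n ?p) = star m" if i: "i \<le> n" for i
    using H_face[OF i p] H_bdry cylinder_id_face_bdry[OF i]
      cylinder_act_closed[OF simp_op_coface[OF i] p]
    by (simp add: cylinder_simplices mem_Times_iff del: upt_Suc)
  then show ?thesis unfolding sphere_iff using H_closed[OF p] by simp
qed

lemma H_slice_first: "H n ([0..<Suc n], delta1_step n 0) = b"
  using H_ends[OF id_simplex] yon_id b by (simp add: delta1_step_0 sphere_iff del: upt_Suc)

lemma H_slice_last: "H n ([0..<Suc n], delta1_step n (Suc n)) = a"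
  using H_ends[OF id_simplex] yon_id a by (simp add: delta1_step_last sphere_iff del: upt_Suc)

lemma H_slice_htpy_at:
  assumes j: "j \<le> n"
  shows "htpy_at j (H n ([0..<Suc n], delta1_step n j)) (H n ([0..<Suc n], delta1_step n (Suc j)))"
proof -
  have c: "prism_simplex n j \<in> ss_sx (cylinder n) (Suc n)" using prism_simplex_simplex[OF j] .
  have "face i (Suc n) (H (Suc n) (prism_simplex n j)) =
      (if i = j then H n ([0..<Suc n], delta1_step n j)
       else if i = Suc j then H n ([0..<Suc n], delta1_step n (Suc j)) else star n)"
    if i: "i \<le> Suc n" for i
  proof (cases "i = j \<or> i = Suc j")
    case True
    then show ?thesis using H_face[OF i c] prism_simplex_inner_face[OF True j] by auto
  next
    case False
    then show ?thesis
      using H_face[OF i c] H_bdry prism_simplex_outer_face[OF i _ _ j]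
        cylinder_act_closed[OF simp_op_coface[OF i] c]
      by (simp add: cylinder_simplices mem_Times_iff)
  qed
  then show ?thesis
    unfolding htpy_at_def has_faces_def using H_closed[OF c] by blast
qed

lemma htpy_of_tau_htpy: "htpy_at n a b"
proof -
  let ?E = "\<lambda>j. H n ([0..<Suc n], delta1_step n j)"
  have "htpy_at n (?E 0) (?E j)" if "j \<le> Suc n" for j
    using that
  proof (induction j)
    case 0
    show ?case using htpy_at_refl[OF H_slice_sphere] by simp
  next
    case (Suc j)
    then show ?case
      using htpy_trans[OF H_slice_sphere] htpy_at_imp_htpy[OF _ H_slice_sphere H_slice_htpy_at] by simp
  qed
  then have "htpy_at n b a" using H_slice_first H_slice_last by (metis order_refl)
  then show ?thesis using htpy_sym[OF b] by blast
qed

end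

lemma tau_htpy_iff:
  assumes a: "a \<in> S" and b: "b \<in> S"
  shows "tau_htpy (th0 K) n a b \<longleftrightarrow> htpy_at n a b"
proof
  assume "tau_htpy (th0 K) n a b"
  then show "htpy_at n a b"
    unfolding tau_htpy_def th0_yon cylinder_def[symmetric] using htpy_of_tau_htpy[OF a b] by blast
qed (use tau_htpy_of_htpy a in blast)

lemma tau_cls_eq: "a \<in> S \<Longrightarrow> tau_cls (th0 K) v n a = cls a"
  unfolding tau_cls_def pi_cls_def tau_sphere_eq pi_htpy_iff using tau_htpy_iff by blast

lemma tau_monoid_carrier: "carrier (tau_monoid (th0 K) v n) = carrier G"
  unfolding tau_monoid_def pi_group_def tau_sphere_eq using tau_cls_eq by simp

lemma tau_monoid_one: "one (tau_monoid (th0 K) v n) = one G"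
  unfolding tau_monoid_def pi_group_def using tau_cls_eq[OF star_sphere] by simp

lemma tau_witness_cls_iff:
  assumes "\<alpha> \<in> S" "\<beta> \<in> S"
  shows "(tau_witness (th0 K) v n \<alpha> \<beta> \<theta> \<and> C = tau_cls (th0 K) v n (face n (Suc n) \<theta>)) \<longleftrightarrow>
    \<theta> \<in> X (Suc n) \<and> (\<forall>i<n - 1. face i (Suc n) \<theta> = star n) \<and> face (n - 1) (Suc n) \<theta> = \<alpha> \<and>
    face (Suc n) (Suc n) \<theta> = \<beta> \<and> C = cls (face n (Suc n) \<theta>)"
proof -
  have "tau_cls (th0 K) v n (face n (Suc n) \<theta>) = cls (face n (Suc n) \<theta>)"
    if "tau_witness (th0 K) v n \<alpha> \<beta> \<theta>"
    using that assms tau_cls_eq pi_prod_sphere unfolding tau_witness_iff pi_prod_iff by blast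
  then show ?thesis using tau_witness_iff by auto
qed

lemma tau_monoid_mult:
  assumes "A \<in> carrier G" "B \<in> carrier G"
  shows "mult (tau_monoid (th0 K) v n) A B = mult G A B"
proof -
  have "A \<subseteq> S" "B \<subseteq> S" using assms unfolding pi_group_def pi_cls_def by auto
  then show ?thesis
    unfolding tau_monoid_def pi_group_def monoid.simps th0_face
    by (intro arg_cong[where f = The] ext bex_cong refl)
      (auto simp: tau_witness_cls_iff subsetD Bex_def)
qed

end

lemma group_cong_on_carrier:
  assumes "group G" "carrier H = carrier G" "one H = one G"
    and "\<And>a b. a \<in> carrier H \<Longrightarrow> b \<in> carrier H \<Longrightarrow> mult H a b = mult G a b"
  shows "group H"
proof -
  interpret G: group G by fact
  show ?thesis
    by (rule groupI) (use assms G.m_assoc G.l_inv_ex in auto)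
qed

theorem mainTheorem5:
  fixes K :: "'a sset" and v :: 'a and n :: nat
  assumes "kan_complex K" and "v \<in> ss_sx K 0" and "1 \<le> n"
  shows "group (tau_monoid (th0 K) v n) \<and>
         carrier (tau_monoid (th0 K) v n) = carrier (pi_group K v n) \<and>
         one (tau_monoid (th0 K) v n) = one (pi_group K v n) \<and>
         (\<forall>A\<in>carrier (tau_monoid (th0 K) v n). \<forall>B\<in>carrier (tau_monoid (th0 K) v n).
             mult (tau_monoid (th0 K) v n) A B = mult (pi_group K v n) A B)"
proof -
  obtain m where n: "n = Suc m" using assms(3) by (cases n) auto
  interpret pointed_kan K v m
    using assms(1,2) by unfold_locales (simp_all add: kan_complex_def)
  show ?thesis
    unfolding n
    using group_cong_on_carrier[OF group_pi_group tau_monoid_carrier tau_monoid_one]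
      tau_monoid_carrier tau_monoid_one tau_monoid_mult
    by auto
qed

end
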